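(* Let $\iota$ be a unimodal sp-implication, let $(\mathfrak F_i)_{i\in I}$ be a family of frames and $\mathfrak G$ a frame with $(\mathfrak F_i)_{i\in I}\gg\mathfrak G$. If $\mathfrak F_i$ validates $\iota$ for every $i\in I$, then $\mathfrak G$ validates $\iota$.
   Context: Unimodal setting: one diamond $\Diamond$; sp-formulas built from variables and $\top$ by $\wedge,\Diamond$; sp-implications $\sigma\to\tau$; frames $(W,R)$ with standard Kripke semantics, a frame validating $\sigma\to\tau$ if at every point of every model over it $\sigma$ implies $\tau$. A homomorphism $h:(W_1,R_1)\to(W_2,R_2)$ is a map with $(x,y)\in R_1\Rightarrow(h(x),h(y))\in R_2$. A finite tree is a finite frame $(T,R^{\mathfrak T})$ that is a directed tree (irreflexive, with a root from which every point is reached by a unique path). Let $\mathfrak F_i=(W_i,R_i)$ ($i\in I$), $\mathfrak G=(W,R^{\mathfrak G})$, $\mathfrak T=(T,R^{\mathfrak T})$ be frames, $w\in T$, $g_i:\mathfrak T\to\mathfrak F_i$ and $h:\mathfrak T\to\mathfrak G$ homomorphisms, and $Z\subseteq(\prod_{i\in I}W_i)\times W$. Write $(\mathfrak F_i,g_i)_{i\in I}\gg_Z(\mathfrak G,h,w)$ if: (s1) $((g_i(w))_{i\in I},h(w))\in Z$; (s2) for all $(\bar x,y)\in Z$ and $\bar x'=(x'_i)_{i\in I}\in\prod_iW_i$ with $(x_i,x'_i)\in R_i$ for all $i$, there is $y'$ with $(y,y')\in R^{\mathfrak G}$ and $(\bar x',y')\in Z$; (s3) for all $(\bar x,y)\in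 Z$ and $A\subseteq T$, if $x_i\in g_i[A]$ for all $i\in I$ then $y\in h[A]$. Write $(\mathfrak F_i)_{i\in I}\gg\mathfrak G$ if for every finite tree $\mathfrak T$ with root $w$ and every homomorphism $h:\mathfrak T\to\mathfrak G$ there exist homomorphisms $g_i:\mathfrak T\to\mathfrak F_i$ ($i\in I$) and $Z$ such that $(\mathfrak F_i,g_i)_{i\in I}\gg_Z(\mathfrak G,h,w)$. *)

theory Defs
  imports Main "HOL-Library.FuncSet"
begin

datatype spf = Var nat | Top | Conj spf spf | Dia spf

text \<open>An sp-implication sigma -> tau is represented as the pair (sigma, tau).\<close>
type_synonym spimp = "spf \<times> spf"

definition is_frame :: "'a set \<Rightarrow> ('a \<times> 'a) set \<Rightarrow> bool" where
  "is_frame W R \<longleftrightarrow> R \<subseteq> W \<times> W"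

fun sat :: "('a \<times> 'a) set \<Rightarrow> (nat \<Rightarrow> 'a set) \<Rightarrow> 'a \<Rightarrow> spf \<Rightarrow> bool" where
  "sat R V x (Var p) = (x \<in> V p)"
| "sat R V x Top = True"
| "sat R V x (Conj a b) = (sat R V x a \<and> sat R V x b)"
| "sat R V x (Dia a) = (\<exists>y. (x, y) \<in> R \<and> sat R V y a)"

definition frame_valid :: "'a set \<Rightarrow> ('a \<times> 'a) set \<Rightarrow> spimp \<Rightarrow> bool" where
  "frame_valid W R \<iota> \<longleftrightarrow>
     (\<forall>V. (\<forall>p. V p \<subseteq> W) \<longrightarrow> (\<forall>x\<in>W. sat R V x (fst \<iota>) \<longrightarrow> sat R V x (snd \<iota>)))"

definition is_hom :: "'a set \<Rightarrow> ('a \<times> 'a) set \<Rightarrow> 'b set \<Rightarrow> ('b \<times> 'b) set \<Rightarrow> ('a \<Rightarrow> 'b) \<Rightarrow> bool" where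
  "is_hom W1 R1 W2 R2 h \<longleftrightarrow> h ` W1 \<subseteq> W2 \<and> (\<forall>x y. (x, y) \<in> R1 \<longrightarrow> (h x, h y) \<in> R2)"

definition rpath :: "('a \<times> 'a) set \<Rightarrow> 'a list \<Rightarrow> bool" where
  "rpath R xs \<longleftrightarrow> xs \<noteq> [] \<and> (\<forall>i. Suc i < length xs \<longrightarrow> (xs ! i, xs ! Suc i) \<in> R)"

definition finite_tree_root :: "'t set \<Rightarrow> ('t \<times> 't) set \<Rightarrow> 't \<Rightarrow> bool" where
  "finite_tree_root T R r \<longleftrightarrow> finite T \<and> is_frame T R \<and> irrefl R \<and> r \<in> T \<and>
     (\<forall>x\<in>T. \<exists>!xs. rpath R xs \<and> hd xs = r \<and> last xs = x)"

definition simZ ::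
  "'i set \<Rightarrow> ('i \<Rightarrow> 'a set) \<Rightarrow> ('i \<Rightarrow> ('a \<times> 'a) set) \<Rightarrow> ('i \<Rightarrow> 't \<Rightarrow> 'a) \<Rightarrow>
   'b set \<Rightarrow> ('b \<times> 'b) set \<Rightarrow> ('t \<Rightarrow> 'b) \<Rightarrow> 't set \<Rightarrow> 't \<Rightarrow> (('i \<Rightarrow> 'a) \<times> 'b) set \<Rightarrow> bool" where
  "simZ I W R g WG RG h T w Z \<longleftrightarrow>
     Z \<subseteq> (PiE I W) \<times> WG \<and>
     ((\<lambda>i\<in>I. g i w), h w) \<in> Z \<and>
     (\<forall>xs y xs'. (xs, y) \<in> Z \<longrightarrow> xs' \<in> PiE I W \<longrightarrow> (\<forall>i\<in>I. (xs i, xs' i) \<in> R i) \<longrightarrow>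
        (\<exists>y'. (y, y') \<in> RG \<and> (xs', y') \<in> Z)) \<and>
     (\<forall>xs y A. (xs, y) \<in> Z \<longrightarrow> A \<subseteq> T \<longrightarrow> (\<forall>i\<in>I. xs i \<in> g i ` A) \<longrightarrow> y \<in> h ` A)"

text \<open>Finite trees are taken with carriers in nat; since the condition is
  invariant under isomorphism of trees and every finite tree is isomorphic to one on nat,
  this is equivalent to quantifying over all finite trees.\<close>
definition simF ::
  "'i set \<Rightarrow> ('i \<Rightarrow> 'a set) \<Rightarrow> ('i \<Rightarrow> ('a \<times> 'a) set) \<Rightarrow> 'b set \<Rightarrow> ('b \<times> 'b) set \<Rightarrow> bool" where
  "simF I W R WG RG \<longleftrightarrow>
     (\<forall>(T :: nat set) RT w h. finite_tree_root T RT w \<longrightarrow> is_hom T RT WG RG h \<longrightarrow>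
        (\<exists>g Z. (\<forall>i\<in>I. is_hom T RT (W i) (R i) (g i)) \<and> simZ I W R g WG RG h T w Z))"

end

theory Submission
  imports Defs "HOL-Library.Nat_Bijection"
begin

(* Let sigma hold at y under V in G. Unravelling sigma gives a finite tree T with root w, a
   valuation L on T making sigma true at w, and a homomorphism h from T to G with h w = y and
   h[L p] contained in V p. Homomorphisms preserve sp-formulas, so each F_i satisfies sigma,
   hence tau, at g_i w under the valuation g_i[L p]. By (s2) and (s3), truth of tau at the
   tuple (g_i w)_i transfers along Z to truth of tau at h w under h[L p], which lies inside V p. *)

lemma sat_image_hom:
  assumes "\<And>x y. (x, y) \<in> R1 \<Longrightarrow> (f x, f y) \<in> R2" and "sat R1 L x \<phi>"
  shows "sat R2 (\<lambda>p. f ` L p) (f x) \<phi>"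
  using assms(2) by (induction \<phi> arbitrary: x) (auto dest: assms(1))

lemma sat_mono_val: "(\<And>p. V p \<subseteq> V' p) \<Longrightarrow> sat R V x \<phi> \<Longrightarrow> sat R V' x \<phi>"
  by (induction \<phi> arbitrary: x) auto

fun top_vars :: "spf \<Rightarrow> nat list" where
  "top_vars (Var p) = [p]"
| "top_vars Top = []"
| "top_vars (Conj a b) = top_vars a @ top_vars b"
| "top_vars (Dia a) = []"

fun top_dias :: "spf \<Rightarrow> spf list" where
  "top_dias (Var p) = []"
| "top_dias Top = []"
| "top_dias (Conj a b) = top_dias a @ top_dias b"
| "top_dias (Dia a) = [a]"

lemma sat_iff_top:
  "sat R V x \<phi> \<longleftrightarrow>
     (\<forall>p\<in>set (top_vars \<phi>). x \<in> V p) \<and> (\<forall>a\<in>set (top_dias \<phi>). \<exists>y. (x, y) \<in> R \<and> sat R V y a)"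
  by (induction \<phi>) auto

lemma size_top_dias: "a \<in> set (top_dias \<phi>) \<Longrightarrow> size a < size \<phi>"
  by (induction \<phi>) auto

lemma length_top_dias_le: "length (top_dias \<phi>) \<le> size \<phi>"
  by (induction \<phi>) auto

text \<open>The unravelling tree of an sp-formula: a position is a list of indices into successive
  \<^const>\<open>top_dias\<close> lists, and the edges extend a position by one index.\<close>

fun is_pos :: "spf \<Rightarrow> nat list \<Rightarrow> bool" where
  "is_pos \<phi> [] = True"
| "is_pos \<phi> (i # q) = (i < length (top_dias \<phi>) \<and> is_pos (top_dias \<phi> ! i) q)"

fun subf_at :: "spf \<Rightarrow> nat list \<Rightarrow> spf" where
  "subf_at \<phi> [] = \<phi>"
| "subf_at \<phi> (i # q) = subf_at (top_dias \<phi> ! i) q"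

definition pos_rel :: "spf \<Rightarrow> (nat list \<times> nat list) set" where
  "pos_rel \<phi> = {(q, q'). is_pos \<phi> q \<and> is_pos \<phi> q' \<and> (\<exists>i. q' = q @ [i])}"

lemma is_pos_append: "is_pos \<phi> (q @ r) \<longleftrightarrow> is_pos \<phi> q \<and> is_pos (subf_at \<phi> q) r"
  by (induction q arbitrary: \<phi>) auto

lemma subf_at_append: "subf_at \<phi> (q @ r) = subf_at (subf_at \<phi> q) r"
  by (induction q arbitrary: \<phi>) auto

lemma is_pos_bounded: "is_pos \<phi> q \<Longrightarrow> length q \<le> size \<phi> \<and> set q \<subseteq> {..<size \<phi>}"
proof (induction q arbitrary: \<phi>)
  case (Cons i q)
  then have i: "i < length (top_dias \<phi>)" and q: "is_pos (top_dias \<phi> ! i) q" by auto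
  have "size (top_dias \<phi> ! i) < size \<phi>" using i size_top_dias nth_mem by blast
  moreover have "i < size \<phi>" using i length_top_dias_le[of \<phi>] by linarith
  ultimately show ?case using Cons.IH[OF q] by auto
qed simp

lemma finite_positions: "finite {q. is_pos \<phi> q}"
proof (rule finite_subset)
  show "{q. is_pos \<phi> q} \<subseteq> {q. set q \<subseteq> {..<size \<phi>} \<and> length q \<le> size \<phi>}"
    using is_pos_bounded by blast
qed (rule finite_lists_length_le[OF finite_lessThan])

lemma rpath_snoc:
  assumes "xs \<noteq> []" shows "rpath R (xs @ [x]) \<longleftrightarrow> rpath R xs \<and> (last xs, x) \<in> R"
proof -
  have "(\<forall>i. Suc i < length (xs @ [x]) \<longrightarrow> ((xs @ [x]) ! i, (xs @ [x]) ! Suc i) \<in> R) \<longleftrightarrow>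
        (\<forall>i. Suc i < length xs \<longrightarrow> (xs ! i, xs ! Suc i) \<in> R) \<and> (last xs, x) \<in> R"
  proof (intro iffI conjI allI impI)
    fix i assume l: "\<forall>i. Suc i < length (xs @ [x]) \<longrightarrow> ((xs @ [x]) ! i, (xs @ [x]) ! Suc i) \<in> R"
    show "(last xs, x) \<in> R" using l[rule_format, of "length xs - 1"] assms
      by (simp add: nth_append last_conv_nth)
    assume "Suc i < length xs"
    then show "(xs ! i, xs ! Suc i) \<in> R" using l[rule_format, of i] by (simp add: nth_append)
  next
    fix i assume r: "(\<forall>i. Suc i < length xs \<longrightarrow> (xs ! i, xs ! Suc i) \<in> R) \<and> (last xs, x) \<in> R"
      and i: "Suc i < length (xs @ [x])"
    show "((xs @ [x]) ! i, (xs @ [x]) ! Suc i) \<in> R"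
    proof (cases "Suc i < length xs")
      case True
      then show ?thesis using r by (simp add: nth_append)
    next
      case False
      then have "i = length xs - 1" using i by simp
      then show ?thesis using r assms by (simp add: nth_append last_conv_nth)
    qed
  qed
  then show ?thesis unfolding rpath_def using assms by simp
qed

definition prefixes :: "'a list \<Rightarrow> 'a list list" where
  "prefixes q = map (\<lambda>k. take k q) [0..<Suc (length q)]"

lemma prefixes_snoc: "prefixes (q @ [i]) = prefixes q @ [q @ [i]]"
  unfolding prefixes_def by (auto intro: nth_equalityI simp: nth_append)

lemma rpath_pos_rel_iff_prefixes:
  "rpath (pos_rel \<phi>) xs \<and> hd xs = [] \<longleftrightarrow> is_pos \<phi> (last xs) \<and> xs = prefixes (last xs)"
proof (induction xs rule: rev_induct)
  case (snoc x xs)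
  show ?case
  proof (cases "xs = []")
    case True
    then show ?thesis by (auto simp: rpath_def prefixes_def pos_rel_def)
  next
    case False
    have "rpath (pos_rel \<phi>) (xs @ [x]) \<and> hd (xs @ [x]) = []
        \<longleftrightarrow> (is_pos \<phi> (last xs) \<and> xs = prefixes (last xs)) \<and> (last xs, x) \<in> pos_rel \<phi>"
      using False snoc.IH by (auto simp: rpath_snoc)
    also have "\<dots> \<longleftrightarrow> is_pos \<phi> x \<and> xs @ [x] = prefixes x"
    proof
      assume "(is_pos \<phi> (last xs) \<and> xs = prefixes (last xs)) \<and> (last xs, x) \<in> pos_rel \<phi>"
      then show "is_pos \<phi> x \<and> xs @ [x] = prefixes x"
        by (auto simp: pos_rel_def prefixes_snoc)
    next
      assume x: "is_pos \<phi> x \<and> xs @ [x] = prefixes x"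
      then have "x \<noteq> []" using False by (auto simp: prefixes_def)
      then obtain q i where qi: "x = q @ [i]" by (metis rev_exhaust)
      then have "xs = prefixes q" using x by (simp add: prefixes_snoc)
      moreover have "last xs = q" using \<open>xs = prefixes q\<close> by (simp add: prefixes_def)
      ultimately show "(is_pos \<phi> (last xs) \<and> xs = prefixes (last xs)) \<and> (last xs, x) \<in> pos_rel \<phi>"
        using x qi is_pos_append[of \<phi> q "[i]"] by (auto simp: pos_rel_def)
    qed
    finally show ?thesis by simp
  qed
qed (simp add: rpath_def prefixes_def)

lemma finite_tree_pos_rel: "finite_tree_root {q. is_pos \<phi> q} (pos_rel \<phi>) []"
  unfolding finite_tree_root_def
proof (intro conjI ballI)
  fix q assume "q \<in> {q. is_pos \<phi> q}"
  then have "rpath (pos_rel \<phi>) (prefixes q) \<and> hd (prefixes q) = []"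
    by (subst rpath_pos_rel_iff_prefixes) (simp add: prefixes_def)
  moreover have "last (prefixes q) = q" by (simp add: prefixes_def)
  ultimately show "\<exists>!xs. rpath (pos_rel \<phi>) xs \<and> hd xs = [] \<and> last xs = q"
    using rpath_pos_rel_iff_prefixes by metis
qed (auto simp: finite_positions is_frame_def irrefl_def pos_rel_def)

lemma mem_map_prod_bij:
  assumes f: "bij f" shows "(a, b) \<in> map_prod f f ` R \<longleftrightarrow> (inv f a, inv f b) \<in> R"
proof
  assume "(a, b) \<in> map_prod f f ` R"
  then show "(inv f a, inv f b) \<in> R" using bij_is_inj[OF f] by auto
next
  assume "(inv f a, inv f b) \<in> R"
  then have "map_prod f f (inv f a, inv f b) \<in> map_prod f f ` R" by (rule imageI)
  then show "(a, b) \<in> map_prod f f ` R" using bij_is_surj[OF f] by (simp add: surj_f_inv_f)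
qed

lemma rpath_map_prod_bij: "bij f \<Longrightarrow> rpath (map_prod f f ` R) ys \<longleftrightarrow> rpath R (map (inv f) ys)"
  unfolding rpath_def by (simp add: mem_map_prod_bij)

lemma finite_tree_root_bij_image:
  assumes f: "bij f" and T: "finite_tree_root T R r"
  shows "finite_tree_root (f ` T) (map_prod f f ` R) (f r)"
  unfolding finite_tree_root_def
proof (intro conjI ballI)
  have inv_eq: "inv f a = b \<longleftrightarrow> a = f b" for a b using f by (metis bij_inv_eq_iff)
  fix x assume "x \<in> f ` T"
  then obtain x0 where x0: "x0 \<in> T" "x = f x0" by blast
  let ?P = "\<lambda>xs. rpath R xs \<and> hd xs = r \<and> last xs = x0"
  have "\<exists>!xs. ?P xs" using T x0(1) unfolding finite_tree_root_def by blast
  moreover have "rpath (map_prod f f ` R) ys \<and> hd ys = f r \<and> last ys = x \<longleftrightarrow> ?P (map (inv f) ys)"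
    for ys
  proof (cases ys)
    case Nil
    then show ?thesis by (simp add: rpath_def)
  next
    case Cons
    then show ?thesis using f x0(2)
      by (simp add: rpath_map_prod_bij hd_map last_map inv_eq)
  qed
  moreover have "map (inv f) (map f xs) = xs" "map f (map (inv f) ys) = ys" for xs ys
    using f by (simp_all add: bij_is_inj bij_is_surj surj_f_inv_f map_idI)
  ultimately show "\<exists>!ys. rpath (map_prod f f ` R) ys \<and> hd ys = f r \<and> last ys = x"
    by metis
next
  show "irrefl (map_prod f f ` R)"
    using T unfolding finite_tree_root_def irrefl_def by (simp add: mem_map_prod_bij[OF f])
qed (use T in \<open>auto simp: finite_tree_root_def is_frame_def\<close>)

definition succ_witness :: "('b \<times> 'b) set \<Rightarrow> (nat \<Rightarrow> 'b set) \<Rightarrow> spf \<Rightarrow> 'b \<Rightarrow> nat \<Rightarrow> 'b" where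
  "succ_witness R V \<phi> x i = (SOME z. (x, z) \<in> R \<and> sat R V z (top_dias \<phi> ! i))"

fun unravel_map :: "('b \<times> 'b) set \<Rightarrow> (nat \<Rightarrow> 'b set) \<Rightarrow> spf \<Rightarrow> 'b \<Rightarrow> nat list \<Rightarrow> 'b" where
  "unravel_map R V \<phi> x [] = x"
| "unravel_map R V \<phi> x (i # q) = unravel_map R V (top_dias \<phi> ! i) (succ_witness R V \<phi> x i) q"

lemma succ_witness:
  assumes "sat R V x \<phi>" and "i < length (top_dias \<phi>)"
  shows "(x, succ_witness R V \<phi> x i) \<in> R \<and> sat R V (succ_witness R V \<phi> x i) (top_dias \<phi> ! i)"
proof -
  have "\<exists>z. (x, z) \<in> R \<and> sat R V z (top_dias \<phi> ! i)"
    using assms nth_mem sat_iff_top[of R V x \<phi>] by blast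
  then show ?thesis unfolding succ_witness_def by (rule someI_ex)
qed

lemma unravel_map_snoc:
  "unravel_map R V \<phi> x (q @ [i]) = succ_witness R V (subf_at \<phi> q) (unravel_map R V \<phi> x q) i"
  by (induction q arbitrary: \<phi> x) auto

lemma sat_unravel_map:
  "is_pos \<phi> q \<Longrightarrow> sat R V x \<phi> \<Longrightarrow> sat R V (unravel_map R V \<phi> x q) (subf_at \<phi> q)"
  by (induction q arbitrary: \<phi> x) (auto dest: succ_witness)

lemma unravel_map_hom:
  assumes "is_frame W R" and "y \<in> W" and "sat R V y \<sigma>"
  shows "is_hom {q. is_pos \<sigma> q} (pos_rel \<sigma>) W R (unravel_map R V \<sigma> y)"
proof -
  have edge: "(unravel_map R V \<sigma> y q, unravel_map R V \<sigma> y (q @ [i])) \<in> R"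
    if "is_pos \<sigma> (q @ [i])" for q i
  proof -
    have "is_pos \<sigma> q" "i < length (top_dias (subf_at \<sigma> q))"
      using that by (simp_all add: is_pos_append)
    then show ?thesis
      using succ_witness[OF sat_unravel_map[OF _ assms(3)]] by (simp add: unravel_map_snoc)
  qed
  have "unravel_map R V \<sigma> y q \<in> W" if "is_pos \<sigma> q" for q
  proof (cases q rule: rev_exhaust)
    case (snoc q' i)
    then show ?thesis using edge that assms(1) unfolding is_frame_def by blast
  qed (use assms(2) in simp)
  then show ?thesis using edge unfolding is_hom_def pos_rel_def by auto
qed

definition pos_label :: "spf \<Rightarrow> nat \<Rightarrow> nat list set" where
  "pos_label \<sigma> p = {q. is_pos \<sigma> q \<and> p \<in> set (top_vars (subf_at \<sigma> q))}"

lemma sat_pos_label: "is_pos \<sigma> q \<Longrightarrow> sat (pos_rel \<sigma>) (pos_label \<sigma>) q (subf_at \<sigma> q)"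
proof (induction "size (subf_at \<sigma> q)" arbitrary: q rule: less_induct)
  case less
  show ?case unfolding sat_iff_top[of _ _ q]
  proof (intro conjI ballI)
    fix a assume "a \<in> set (top_dias (subf_at \<sigma> q))"
    then obtain i where i: "i < length (top_dias (subf_at \<sigma> q))" "a = top_dias (subf_at \<sigma> q) ! i"
      by (metis in_set_conv_nth)
    have q': "is_pos \<sigma> (q @ [i])" "subf_at \<sigma> (q @ [i]) = a"
      using i less.prems by (simp_all add: is_pos_append subf_at_append)
    have "sat (pos_rel \<sigma>) (pos_label \<sigma>) (q @ [i]) a"
      using less.hyps[OF _ q'(1)] q'(2) size_top_dias i nth_mem by metis
    moreover have "(q, q @ [i]) \<in> pos_rel \<sigma>" using less.prems q' by (auto simp: pos_rel_def)
    ultimately show "\<exists>z. (q, z) \<in> pos_rel \<sigma> \<and> sat (pos_rel \<sigma>) (pos_label \<sigma>) z a" by blast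
  qed (use less.prems in \<open>simp add: pos_label_def\<close>)
qed

lemma unravel_map_label:
  assumes "sat R V y \<sigma>"
  shows "unravel_map R V \<sigma> y ` pos_label \<sigma> p \<subseteq> V p"
proof
  fix z assume "z \<in> unravel_map R V \<sigma> y ` pos_label \<sigma> p"
  then obtain q where q: "is_pos \<sigma> q" "p \<in> set (top_vars (subf_at \<sigma> q))"
    and z: "z = unravel_map R V \<sigma> y q"
    unfolding pos_label_def by blast
  show "z \<in> V p"
    using sat_unravel_map[OF q(1) assms] q(2) z
      sat_iff_top[of R V "unravel_map R V \<sigma> y q" "subf_at \<sigma> q"] by blast
qed

lemma sat_tree_cover:
  assumes "is_frame W R" and "y \<in> W" and "sat R V y \<sigma>"
  obtains T :: "nat set" and RT w h L
  where "finite_tree_root T RT w" and "is_hom T RT W R h" and "h w = y"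
    and "\<forall>p. L p \<subseteq> T \<and> h ` L p \<subseteq> V p" and "sat RT L w \<sigma>"
proof -
  let ?h = "unravel_map R V \<sigma> y"
  let ?RT = "map_prod list_encode list_encode ` pos_rel \<sigma>"
  let ?L = "\<lambda>p. list_encode ` pos_label \<sigma> p"
  show thesis
  proof (rule that)
    show "finite_tree_root (list_encode ` {q. is_pos \<sigma> q}) ?RT (list_encode [])"
      by (rule finite_tree_root_bij_image[OF bij_list_encode finite_tree_pos_rel])
    show "is_hom (list_encode ` {q. is_pos \<sigma> q}) ?RT W R (?h \<circ> list_decode)"
      using unravel_map_hom[OF assms] unfolding is_hom_def by auto
    show "\<forall>p. ?L p \<subseteq> list_encode ` {q. is_pos \<sigma> q} \<and> (?h \<circ> list_decode) ` ?L p \<subseteq> V p"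
      using unravel_map_label[OF assms(3)] by (auto simp: pos_label_def image_image)
    show "sat ?RT ?L (list_encode []) \<sigma>"
      using sat_image_hom[of "pos_rel \<sigma>" list_encode ?RT, OF _ sat_pos_label[of \<sigma> "[]"]]
      by (simp add: mem_map_prod_bij[OF bij_list_encode] inv_f_f[OF inj_list_encode])
  qed simp
qed

lemma sat_along_simZ:
  assumes Z: "simZ I W R g WG RG h T w Z" and frames: "\<forall>i\<in>I. is_frame (W i) (R i)"
    and L: "\<forall>p. L p \<subseteq> T"
    and "(xs, y) \<in> Z" and "\<forall>i\<in>I. sat (R i) (\<lambda>p. g i ` L p) (xs i) \<tau>"
  shows "sat RG (\<lambda>p. h ` L p) y \<tau>"
  using assms(4,5)
proof (induction \<tau> arbitrary: xs y)
  case (Var p)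
  then show ?case using Z L unfolding simZ_def by simp
next
  case (Dia a)
  have forth: "\<exists>y'. (y, y') \<in> RG \<and> (xs', y') \<in> Z"
    if "xs' \<in> PiE I W" "\<forall>i\<in>I. (xs i, xs' i) \<in> R i" for xs'
    using Z Dia.prems(1) that unfolding simZ_def by blast
  obtain f where f: "\<forall>i\<in>I. (xs i, f i) \<in> R i \<and> sat (R i) (\<lambda>p. g i ` L p) (f i) a"
    using bchoice[of I "\<lambda>i x'. (xs i, x') \<in> R i \<and> sat (R i) (\<lambda>p. g i ` L p) x' a"] Dia.prems(2)
    by auto
  have "restrict f I \<in> PiE I W"
    unfolding restrict_PiE_iff using f frames unfolding is_frame_def by blast
  moreover have "\<forall>i\<in>I. (xs i, restrict f I i) \<in> R i" using f by simp
  ultimately obtain y' where y': "(y, y') \<in> RG" "(restrict f I, y') \<in> Z"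
    using forth by blast
  have "sat RG (\<lambda>p. h ` L p) y' a" using Dia.IH[OF y'(2)] f by simp
  then show ?case using y'(1) by auto
qed auto

lemma frame_validD:
  "frame_valid W R \<iota> \<Longrightarrow> (\<And>p. V p \<subseteq> W) \<Longrightarrow> x \<in> W \<Longrightarrow> sat R V x (fst \<iota>) \<Longrightarrow> sat R V x (snd \<iota>)"
  unfolding frame_valid_def by blast

lemma frame_valid_hom_image:
  assumes "frame_valid W R \<iota>" and g: "is_hom T RT W R g"
    and "\<forall>p. L p \<subseteq> T" and "w \<in> T" and "sat RT L w (fst \<iota>)"
  shows "sat R (\<lambda>p. g ` L p) (g w) (snd \<iota>)"
proof (rule frame_validD[OF assms(1)])
  show "sat R (\<lambda>p. g ` L p) (g w) (fst \<iota>)"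
    using g assms(5) sat_image_hom[of RT g R L w "fst \<iota>"] unfolding is_hom_def by blast
  show "g ` L p \<subseteq> W" for p using g assms(3) unfolding is_hom_def by blast
  show "g w \<in> W" using g assms(4) unfolding is_hom_def by blast
qed

theorem theorem9p1:
  fixes I :: "'i set" and W :: "'i \<Rightarrow> 'a set" and R :: "'i \<Rightarrow> ('a \<times> 'a) set"
    and WG :: "'b set" and RG :: "('b \<times> 'b) set" and \<iota> :: spimp
  assumes "\<forall>i\<in>I. is_frame (W i) (R i)"
    and "is_frame WG RG"
    and "simF I W R WG RG"
    and "\<forall>i\<in>I. frame_valid (W i) (R i) \<iota>"
  shows "frame_valid WG RG \<iota>"
  unfolding frame_valid_def
proof (intro allI impI ballI)
  fix V y assume "\<forall>p. V p \<subseteq> WG" and y: "y \<in> WG" and "sat RG V y (fst \<iota>)"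
  obtain T RT w h L where T: "finite_tree_root (T :: nat set) RT w"
    and h: "is_hom T RT WG RG h" and "h w = y"
    and L: "\<forall>p. L p \<subseteq> T \<and> h ` L p \<subseteq> V p" and \<sigma>: "sat RT L w (fst \<iota>)"
    by (rule sat_tree_cover[OF assms(2) y \<open>sat RG V y (fst \<iota>)\<close>])
  obtain g Z where g: "\<forall>i\<in>I. is_hom T RT (W i) (R i) (g i)" and Z: "simZ I W R g WG RG h T w Z"
    using assms(3) T h unfolding simF_def by blast
  have "w \<in> T" using T unfolding finite_tree_root_def by blast
  moreover have "\<forall>p. L p \<subseteq> T" using L by blast
  ultimately have "\<forall>i\<in>I. sat (R i) (\<lambda>p. g i ` L p) (g i w) (snd \<iota>)"
    using frame_valid_hom_image[OF assms(4)[rule_format] g[rule_format] _ _ \<sigma>] by blast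
  moreover have "((\<lambda>i\<in>I. g i w), h w) \<in> Z" using Z unfolding simZ_def by blast
  ultimately have "sat RG (\<lambda>p. h ` L p) (h w) (snd \<iota>)"
    using sat_along_simZ[OF Z assms(1)] L by simp
  then show "sat RG V y (snd \<iota>)" using sat_mono_val[of "\<lambda>p. h ` L p" V] L \<open>h w = y\<close> by simp
qed

end
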